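(* Fix a nonempty $A\subseteq S$ and $w\in A$, and let $E_0=\{\tau_{\mathcal E_N^w}=\tau_{\mathcal E_N(A)}\}$. Let $x,y\in S$ be distinct with $r(x,y)>r(y,x)=0$. Then, as $N\to\infty$, $$\big|\mathbb P_{\zeta_1^{x,y}}[E_0]-\mathbb P_{\xi_N^y}[E_0]\big|=O(d_N\log N)\quad\text{and}\quad\big|\mathbb P_{\zeta_{N-1}^{x,y}}[E_0]-\mathbb P_{\xi_N^y}[E_0]\big|=O(d_N).$$
   Context: $S$ is finite; $r:S\times S\to[0,\infty)$, $r(x,x)=0$, are the rates of an irreducible continuous-time Markov chain on $S$. $\mathcal H_N=\{\eta\in\{0,1,2,\dots\}^S:\sum_x\eta_x=N\}$; $\sigma^{x,y}\eta$ moves one particle from $x$ to $y$ (if $\eta_x\ge1$; else $\sigma^{x,y}\eta=\eta$). With $d_N>0$, $d_N\to0$, the inclusion process is the Markov chain on $\mathcal H_N$ with generator $(\mathcal L_NF)(\eta)=\sum_{x\ne y}\eta_x(d_N+\eta_y)r(x,y)\{F(\sigma^{x,y}\eta)-F(\eta)\}$; $\mathbb P_\eta$ its law from $\eta$; $\tau_{\mathcal C}$ the hitting time of $\mathcal C\subseteq\mathcal H_N$. $\xi_N^z$: all $N$ particles at $z$; $\mathcal E_N^z=\{\xi_N^z\}$, $\mathcal E_N(A)=\bigcup_{z\in A}\mathcal E_N^z$. For $0\le i\le N$, $\zeta_i^{x,y}$ is the configuration with $N-i$ particles at $x$, $i$ at $y$, none elsewhere. $O(\cdot)$ has constant independent of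 $N$. *)

theory Defs
  imports "HOL-Analysis.Analysis" "HOL-Library.Landau_Symbols"
begin

definition irreducible_rates :: "('a \<Rightarrow> 'a \<Rightarrow> real) \<Rightarrow> bool" where
  "irreducible_rates r \<longleftrightarrow> (\<forall>x y. (x, y) \<in> {(a, b). r a b > 0}\<^sup>*)"

definition sigma :: "'a \<Rightarrow> 'a \<Rightarrow> ('a \<Rightarrow> nat) \<Rightarrow> ('a \<Rightarrow> nat)" where
  "sigma x y \<eta> = (if \<eta> x \<ge> 1
     then (\<lambda>z. \<eta> z - (if z = x then 1 else 0) + (if z = y then 1 else 0)) else \<eta>)"

definition incl_rate :: "real \<Rightarrow> ('a::finite \<Rightarrow> 'a \<Rightarrow> real) \<Rightarrow> ('a \<Rightarrow> nat) \<Rightarrow> ('a \<Rightarrow> nat) \<Rightarrow> real" where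
  "incl_rate d r \<eta> \<zeta> = (if \<zeta> = \<eta> then 0 else
     (\<Sum>(x, y) \<in> {(x, y). x \<noteq> y \<and> sigma x y \<eta> = \<zeta>}.
        real (\<eta> x) * (d + real (\<eta> y)) * r x y))"

definition incl_total :: "real \<Rightarrow> ('a::finite \<Rightarrow> 'a \<Rightarrow> real) \<Rightarrow> ('a \<Rightarrow> nat) \<Rightarrow> real" where
  "incl_total d r \<eta> = (\<Sum>(x, y) \<in> {(x, y). x \<noteq> y \<and> sigma x y \<eta> \<noteq> \<eta>}.
        real (\<eta> x) * (d + real (\<eta> y)) * r x y)"

definition incl_jump :: "real \<Rightarrow> ('a::finite \<Rightarrow> 'a \<Rightarrow> real) \<Rightarrow> ('a \<Rightarrow> nat) \<Rightarrow> ('a \<Rightarrow> nat) \<Rightarrow> real" where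
  "incl_jump d r \<eta> \<zeta> = incl_rate d r \<eta> \<zeta> / incl_total d r \<eta>"

text \<open>hit_upto d r B C n \<eta>: probability, starting from \<eta>, that the set C is hit within
  n jumps and that the state at the hitting time of C lies in B.\<close>
fun hit_upto :: "real \<Rightarrow> ('a::finite \<Rightarrow> 'a \<Rightarrow> real) \<Rightarrow> ('a \<Rightarrow> nat) set \<Rightarrow> ('a \<Rightarrow> nat) set
      \<Rightarrow> nat \<Rightarrow> ('a \<Rightarrow> nat) \<Rightarrow> real" where
  "hit_upto d r B C 0 \<eta> = (if \<eta> \<in> B then 1 else 0)"
| "hit_upto d r B C (Suc n) \<eta> =
     (if \<eta> \<in> C then (if \<eta> \<in> B then 1 else 0)
      else (\<Sum>\<zeta> \<in> (\<lambda>(x, y). sigma x y \<eta>) ` UNIV. incl_jump d r \<eta> \<zeta> * hit_upto d r B C n \<zeta>))"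

text \<open>For B \<subseteq> C: P_\<eta>[\<tau>_B = \<tau>_C < \<infinity>] for the inclusion process with parameter d.
  (Hitting probabilities of the continuous-time chain coincide with those of its jump chain.)\<close>
definition hit_prob :: "real \<Rightarrow> ('a::finite \<Rightarrow> 'a \<Rightarrow> real) \<Rightarrow> ('a \<Rightarrow> nat) set \<Rightarrow> ('a \<Rightarrow> nat) set
      \<Rightarrow> ('a \<Rightarrow> nat) \<Rightarrow> real" where
  "hit_prob d r B C \<eta> = lim (\<lambda>n. hit_upto d r B C n \<eta>)"

definition xi :: "nat \<Rightarrow> 'a \<Rightarrow> ('a \<Rightarrow> nat)" where
  "xi N z = (\<lambda>u. if u = z then N else 0)"

definition zeta :: "nat \<Rightarrow> nat \<Rightarrow> 'a \<Rightarrow> 'a \<Rightarrow> ('a \<Rightarrow> nat)" where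
  "zeta N i x y = (\<lambda>u. if u = x then N - i else if u = y then i else 0)"

end

theory Submission
  imports Defs "HOL-Analysis.Harmonic_Numbers"
begin

(* Started from \<zeta>_i (1 \<le> i < N), the jump chain moves to \<zeta>_{i+1} with probability
   1 - O(d N / (i (N - i))): the move x \<rightarrow> y has rate (N - i)(d + i) r(x, y), whereas every
   other move has rate at most d N r(a, b), because (x, y) and (y, x) are the only pairs of sites
   both carrying particles and r(y, x) = 0. The hitting probability is harmonic off \<xi>_N(A) with
   values in [0, 1], so it changes by at most this escape probability from \<zeta>_i to \<zeta>_{i+1}.
   Telescoping up to \<zeta>_N = \<xi>_N^y, the sum of N / (i (N - i)) = 1/i + 1/(N - i) over 1 \<le> i < N
   is at most 2 H_N = O(log N), and the single term i = N - 1 is at most 2. The constants do not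
   depend on d. *)

definition jump_targets :: "('a::finite \<Rightarrow> nat) \<Rightarrow> ('a \<Rightarrow> nat) set" where
  "jump_targets \<eta> = (\<lambda>(x, y). sigma x y \<eta>) ` UNIV"

lemma finite_jump_targets [simp]: "finite (jump_targets \<eta>)"
  unfolding jump_targets_def by simp

lemma hit_upto_Suc_jump_targets:
  "hit_upto d r B C (Suc n) \<eta> =
     (if \<eta> \<in> C then (if \<eta> \<in> B then 1 else 0)
      else (\<Sum>\<zeta> \<in> jump_targets \<eta>. incl_jump d r \<eta> \<zeta> * hit_upto d r B C n \<zeta>))"
  unfolding jump_targets_def by simp

lemma sum_incl_rate_jump_targets:
  "(\<Sum>\<zeta>\<in>jump_targets \<eta>. incl_rate d r \<eta> \<zeta>) = incl_total d r \<eta>"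
proof -
  define S where "S = {(x, y). x \<noteq> y \<and> sigma x y \<eta> \<noteq> \<eta>}"
  define g where "g = (\<lambda>(x, y). sigma x y \<eta>)"
  define weight where "weight = (\<lambda>(x, y). real (\<eta> x) * (d + real (\<eta> y)) * r x y)"
  have "incl_rate d r \<eta> \<zeta> = sum weight {p \<in> S. g p = \<zeta>}" for \<zeta>
  proof (cases "\<zeta> = \<eta>")
    case True
    have no_moves: "{p \<in> S. g p = \<eta>} = {}" by (auto simp: S_def g_def)
    show ?thesis by (simp add: incl_rate_def True no_moves)
  next
    case False
    then have "{p \<in> S. g p = \<zeta>} = {(x, y). x \<noteq> y \<and> sigma x y \<eta> = \<zeta>}"
      by (auto simp: S_def g_def)
    with False show ?thesis by (simp add: incl_rate_def weight_def)
  qed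
  then have "(\<Sum>\<zeta>\<in>jump_targets \<eta>. incl_rate d r \<eta> \<zeta>)
      = (\<Sum>\<zeta>\<in>jump_targets \<eta>. sum weight {p \<in> S. g p = \<zeta>})"
    by simp
  also have "\<dots> = sum weight S"
    by (rule sum.group) (auto simp: jump_targets_def g_def)
  also have "\<dots> = incl_total d r \<eta>"
    by (simp add: incl_total_def S_def weight_def)
  finally show ?thesis .
qed

lemma sum_incl_jump_le_1: "(\<Sum>\<zeta>\<in>jump_targets \<eta>. incl_jump d r \<eta> \<zeta>) \<le> 1"
proof -
  have "(\<Sum>\<zeta>\<in>jump_targets \<eta>. incl_jump d r \<eta> \<zeta>) = incl_total d r \<eta> / incl_total d r \<eta>"
    unfolding incl_jump_def by (simp add: sum_divide_distrib[symmetric] sum_incl_rate_jump_targets)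
  also have "\<dots> \<le> 1"
    by (cases "incl_total d r \<eta> = 0") auto
  finally show ?thesis .
qed

lemma sigma_zeta: "x \<noteq> y \<Longrightarrow> i < N \<Longrightarrow> sigma x y (zeta N i x y) = zeta N (Suc i) x y"
  by (auto simp: sigma_def zeta_def fun_eq_iff)

lemma zeta_Suc_in_jump_targets:
  "x \<noteq> y \<Longrightarrow> i < N \<Longrightarrow> zeta N (Suc i) x y \<in> jump_targets (zeta N i x y)"
  unfolding jump_targets_def by (rule image_eqI[where x = "(x, y)"]) (simp_all add: sigma_zeta)

lemma zeta_notin_xi_image:
  assumes "x \<noteq> y" "1 \<le> i" "i < N"
  shows "zeta N i x y \<notin> xi N ` A"
proof
  assume "zeta N i x y \<in> xi N ` A"
  then obtain z where "zeta N i x y = xi N z" by blast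
  then have "zeta N i x y x = xi N z x" "zeta N i x y y = xi N z y" by simp_all
  with assms show False by (auto simp: zeta_def xi_def split: if_splits)
qed

lemma zeta_N_eq_xi: "x \<noteq> y \<Longrightarrow> zeta N N x y = xi N y"
  by (auto simp: zeta_def xi_def fun_eq_iff)

lemma one_minus_div_le_div:
  fixes L R T D :: real
  assumes "0 < L" "L \<le> R" "R \<le> T" "T - R \<le> D"
  shows "1 - R / T \<le> D / L"
proof -
  have "1 - R / T = (T - R) / T"
    using assms by (simp add: field_simps)
  also have "\<dots> \<le> (T - R) / L"
    using assms by (intro divide_left_mono) auto
  also have "\<dots> \<le> D / L"
    using assms by (intro divide_right_mono) auto
  finally show ?thesis .
qed

lemma abs_diff_le_sum_abs_Suc_diff:
  fixes f :: "nat \<Rightarrow> 'a::ordered_ab_group_add_abs"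
  assumes "m \<le> n"
  shows "\<bar>f m - f n\<bar> \<le> (\<Sum>i=m..<n. \<bar>f i - f (Suc i)\<bar>)"
proof -
  have "f m - f n = (\<Sum>i=m..<n. f i - f (Suc i))"
    using sum_Suc_diff'[OF assms, of "\<lambda>i. - f i"] by simp
  then show ?thesis by (simp only: sum_abs)
qed

lemma harm_le_1_plus_ln: "1 \<le> n \<Longrightarrow> harm n \<le> 1 + ln (real n)"
proof -
  assume "1 \<le> n"
  then obtain m where m: "n = Suc m" by (cases n) auto
  have "harm (Suc m) - ln (real (Suc m)) \<le> harm (Suc 0) - ln (real (Suc 0))"
    using decseq_harm_diff_ln unfolding decseq_def by (metis le0)
  moreover have "harm 0 = (0::real)"
    by (simp add: harm_def)
  ultimately show ?thesis
    using m by (simp add: harm_Suc)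
qed

lemma sum_N_div_prod_le_2_harm:
  "(\<Sum>i=1..<N. real N / (real i * real (N - i))) \<le> 2 * harm N"
proof -
  have "(\<Sum>i=1..<N. real N / (real i * real (N - i)))
      = (\<Sum>i=1..<N. 1 / real i) + (\<Sum>i=1..<N. 1 / real (N - i))"
    by (auto simp: field_simps of_nat_diff sum.distrib[symmetric] intro!: sum.cong)
  also have "(\<Sum>i=1..<N. 1 / real (N - i)) = (\<Sum>i=1..<N. 1 / real i)"
    by (rule sum.reindex_bij_witness[where i = "\<lambda>j. N - j" and j = "\<lambda>j. N - j"]) auto
  also have "(\<Sum>i=1..<N. 1 / real i) \<le> (\<Sum>i=1..N. 1 / real i)"
    by (intro sum_mono2) auto
  also have "\<dots> = harm N"
    by (simp add: harm_def inverse_eq_divide)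
  finally show ?thesis by simp
qed

lemma sum_N_div_prod_le_4_ln:
  assumes "3 \<le> N"
  shows "(\<Sum>i=1..<N. real N / (real i * real (N - i))) \<le> 4 * ln (real N)"
proof -
  have "1 \<le> ln (real N)"
    using assms exp_le by (subst ln_ge_iff) auto
  then show ?thesis
    using sum_N_div_prod_le_2_harm[of N] harm_le_1_plus_ln[of N] assms by simp
qed

lemma sum_last_N_div_prod_le_2:
  assumes "2 \<le> N"
  shows "(\<Sum>i=N-1..<N. real N / (real i * real (N - i))) \<le> 2"
proof -
  have "{N-1..<N} = {N - 1}" using assms by auto
  moreover have "real N \<le> 2 * real (N - 1)" using assms by (simp add: of_nat_diff)
  ultimately show ?thesis using assms by (simp add: field_simps)
qed

context
  fixes d :: real and r :: "'a::finite \<Rightarrow> 'a \<Rightarrow> real"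
  assumes d_nonneg: "d \<ge> 0" and r_nonneg: "\<And>a b. r a b \<ge> 0"
begin

lemma incl_move_weight_nonneg: "0 \<le> real (\<eta> a) * (d + real (\<eta> b)) * r a b"
  using d_nonneg r_nonneg by simp

lemma sum_rates_nonneg: "0 \<le> (\<Sum>(a, b)\<in>UNIV. r a b)"
  using r_nonneg by (auto intro: sum_nonneg)

lemma incl_rate_nonneg: "0 \<le> incl_rate d r \<eta> \<zeta>"
  unfolding incl_rate_def
  by (auto intro!: sum_nonneg simp: incl_move_weight_nonneg split: prod.splits)

lemma incl_rate_le_total: "incl_rate d r \<eta> \<zeta> \<le> incl_total d r \<eta>"
  unfolding incl_rate_def incl_total_def
  by (auto intro!: sum_mono2 sum_nonneg simp: incl_move_weight_nonneg split: prod.splits)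

lemma incl_jump_nonneg: "0 \<le> incl_jump d r \<eta> \<zeta>"
  unfolding incl_jump_def using incl_rate_nonneg incl_rate_le_total
  by (metis divide_nonneg_nonneg order_trans)

lemma hit_upto_bounds: "0 \<le> hit_upto d r B C n \<eta> \<and> hit_upto d r B C n \<eta> \<le> 1"
proof (induction n arbitrary: \<eta>)
  case 0
  show ?case by simp
next
  case (Suc n \<eta>)
  let ?s = "\<Sum>\<zeta> \<in> jump_targets \<eta>. incl_jump d r \<eta> \<zeta> * hit_upto d r B C n \<zeta>"
  have "0 \<le> ?s"
    using Suc.IH incl_jump_nonneg by (intro sum_nonneg) simp
  moreover have "?s \<le> (\<Sum>\<zeta> \<in> jump_targets \<eta>. incl_jump d r \<eta> \<zeta>)"
    using Suc.IH incl_jump_nonneg by (intro sum_mono mult_left_le) simp_all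
  ultimately show ?case
    using sum_incl_jump_le_1[of d r \<eta>] unfolding hit_upto_Suc_jump_targets by simp
qed

lemmas hit_upto_nonneg = hit_upto_bounds[THEN conjunct1]
  and hit_upto_le_1 = hit_upto_bounds[THEN conjunct2]

lemma hit_upto_le_Suc:
  assumes "B \<subseteq> C"
  shows "hit_upto d r B C n \<eta> \<le> hit_upto d r B C (Suc n) \<eta>"
proof (induction n arbitrary: \<eta>)
  case 0
  have "0 \<le> (\<Sum>\<zeta> \<in> jump_targets \<eta>. incl_jump d r \<eta> \<zeta> * hit_upto d r B C 0 \<zeta>)"
    using hit_upto_nonneg incl_jump_nonneg by (intro sum_nonneg mult_nonneg_nonneg)
  then show ?case
    using assms unfolding hit_upto_Suc_jump_targets by auto
next
  case (Suc n \<eta>)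
  have "(\<Sum>\<zeta> \<in> jump_targets \<eta>. incl_jump d r \<eta> \<zeta> * hit_upto d r B C n \<zeta>)
      \<le> (\<Sum>\<zeta> \<in> jump_targets \<eta>. incl_jump d r \<eta> \<zeta> * hit_upto d r B C (Suc n) \<zeta>)"
    using Suc.IH incl_jump_nonneg by (intro sum_mono mult_left_mono)
  then show ?case
    unfolding hit_upto_Suc_jump_targets[of d r B C "Suc n"] hit_upto_Suc_jump_targets[of d r B C n]
    by simp
qed

context
  fixes B C :: "('a \<Rightarrow> nat) set"
  assumes B_subset_C: "B \<subseteq> C"
begin

lemma hit_upto_tendsto_hit_prob:
  "(\<lambda>n. hit_upto d r B C n \<eta>) \<longlonglongrightarrow> hit_prob d r B C \<eta>"
proof -
  have "incseq (\<lambda>n. hit_upto d r B C n \<eta>)"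
    using hit_upto_le_Suc[OF B_subset_C] by (simp add: incseq_Suc_iff)
  then obtain L where "(\<lambda>n. hit_upto d r B C n \<eta>) \<longlonglongrightarrow> L"
    by (rule incseq_convergent[where B = 1]) (simp add: hit_upto_le_1)
  then show ?thesis
    unfolding hit_prob_def by (simp add: limI)
qed

lemma hit_prob_nonneg: "0 \<le> hit_prob d r B C \<eta>"
  using hit_upto_nonneg by (intro LIMSEQ_le_const[OF hit_upto_tendsto_hit_prob]) simp

lemma hit_prob_le_1: "hit_prob d r B C \<eta> \<le> 1"
  using hit_upto_le_1 by (intro LIMSEQ_le_const2[OF hit_upto_tendsto_hit_prob]) simp

lemma hit_prob_harmonic:
  assumes "\<eta> \<notin> C"
  shows "hit_prob d r B C \<eta> = (\<Sum>\<zeta> \<in> jump_targets \<eta>. incl_jump d r \<eta> \<zeta> * hit_prob d r B C \<zeta>)"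
proof (rule LIMSEQ_unique)
  show "(\<lambda>n. hit_upto d r B C (Suc n) \<eta>) \<longlonglongrightarrow> hit_prob d r B C \<eta>"
    by (rule LIMSEQ_Suc[OF hit_upto_tendsto_hit_prob])
  show "(\<lambda>n. hit_upto d r B C (Suc n) \<eta>) \<longlonglongrightarrow>
      (\<Sum>\<zeta> \<in> jump_targets \<eta>. incl_jump d r \<eta> \<zeta> * hit_prob d r B C \<zeta>)"
    unfolding hit_upto_Suc_jump_targets using assms
    by (simp add: tendsto_sum tendsto_mult_left hit_upto_tendsto_hit_prob)
qed

lemma hit_prob_diff_le_escape:
  assumes "\<eta> \<notin> C" "\<eta>' \<in> jump_targets \<eta>"
  shows "\<bar>hit_prob d r B C \<eta> - hit_prob d r B C \<eta>'\<bar> \<le> 1 - incl_jump d r \<eta> \<eta>'"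
proof -
  let ?h = "hit_prob d r B C" and ?p = "incl_jump d r \<eta>"
  define rest where "rest = (\<Sum>\<zeta> \<in> jump_targets \<eta> - {\<eta>'}. ?p \<zeta> * ?h \<zeta>)"
  have split_off: "?h \<eta> = ?p \<eta>' * ?h \<eta>' + rest"
    unfolding rest_def hit_prob_harmonic[OF assms(1)] using assms(2) by (simp add: sum.remove)
  have "0 \<le> rest"
    unfolding rest_def using incl_jump_nonneg hit_prob_nonneg by (intro sum_nonneg mult_nonneg_nonneg)
  have "rest \<le> (\<Sum>\<zeta> \<in> jump_targets \<eta> - {\<eta>'}. ?p \<zeta>)"
    unfolding rest_def using incl_jump_nonneg hit_prob_le_1 by (intro sum_mono mult_left_le)
  also have "\<dots> = (\<Sum>\<zeta> \<in> jump_targets \<eta>. ?p \<zeta>) - ?p \<eta>'"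
    using assms(2) by (simp add: sum_diff1)
  finally have "rest \<le> 1 - ?p \<eta>'"
    using sum_incl_jump_le_1[of d r \<eta>] by linarith
  moreover have "0 \<le> (1 - ?p \<eta>') * ?h \<eta>'" "(1 - ?p \<eta>') * ?h \<eta>' \<le> 1 - ?p \<eta>'"
    using \<open>0 \<le> rest\<close> \<open>rest \<le> 1 - ?p \<eta>'\<close> hit_prob_nonneg hit_prob_le_1
    by (auto intro: mult_left_le)
  ultimately show ?thesis
    using split_off \<open>0 \<le> rest\<close> by (auto simp: abs_if algebra_simps)
qed

end

lemma zeta_other_move_weight_le:
  assumes "x \<noteq> y" "r y x = 0" "i < N" "a \<noteq> b"
    and "sigma a b (zeta N i x y) \<noteq> zeta N (Suc i) x y"
  shows "real (zeta N i x y a) * (d + real (zeta N i x y b)) * r a b \<le> d * real N * r a b"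
proof -
  let ?\<eta> = "zeta N i x y"
  have "real (?\<eta> a) * (d + real (?\<eta> b)) * r a b
      = real (?\<eta> a) * d * r a b + real (?\<eta> a) * real (?\<eta> b) * r a b"
    by (simp add: algebra_simps)
  moreover have "real (?\<eta> a) * real (?\<eta> b) * r a b = 0"
    using assms sigma_zeta[of x y i N] by (auto simp: zeta_def split: if_splits)
  moreover have "real (?\<eta> a) * d * r a b \<le> real N * d * r a b"
    using assms(3) d_nonneg r_nonneg[of a b] by (intro mult_right_mono) (auto simp: zeta_def)
  ultimately show ?thesis
    by (simp only: mult_ac)
qed

lemma incl_rate_zeta_Suc_ge:
  assumes "x \<noteq> y" "i < N"
  shows "real (N - i) * real i * r x y \<le> incl_rate d r (zeta N i x y) (zeta N (Suc i) x y)"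
proof -
  let ?\<eta> = "zeta N i x y" and ?\<eta>' = "zeta N (Suc i) x y"
  define weight where "weight = (\<lambda>(a, b). real (?\<eta> a) * (d + real (?\<eta> b)) * r a b)"
  have "?\<eta>' \<noteq> ?\<eta>"
    using assms by (auto simp: zeta_def fun_eq_iff)
  then have rate: "incl_rate d r ?\<eta> ?\<eta>' = sum weight {(a, b). a \<noteq> b \<and> sigma a b ?\<eta> = ?\<eta>'}"
    by (simp add: incl_rate_def weight_def)
  have "real (N - i) * real i * r x y \<le> real (N - i) * (d + real i) * r x y"
    using d_nonneg r_nonneg[of x y] by (intro mult_right_mono mult_left_mono) auto
  also have "\<dots> = weight (x, y)"
    using assms(1) by (simp add: weight_def zeta_def)
  also have "\<dots> \<le> incl_rate d r ?\<eta> ?\<eta>'"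
    unfolding rate using assms sigma_zeta[OF assms]
    by (intro member_le_sum) (auto simp: weight_def incl_move_weight_nonneg)
  finally show ?thesis .
qed

lemma incl_total_minus_rate_zeta_le:
  assumes "x \<noteq> y" "r y x = 0" "i < N"
  shows "incl_total d r (zeta N i x y) - incl_rate d r (zeta N i x y) (zeta N (Suc i) x y)
    \<le> d * real N * (\<Sum>(a, b)\<in>UNIV. r a b)"
proof -
  let ?\<eta> = "zeta N i x y" and ?\<eta>' = "zeta N (Suc i) x y"
  define weight where "weight = (\<lambda>(a, b). real (?\<eta> a) * (d + real (?\<eta> b)) * r a b)"
  define S where "S = {(a, b). a \<noteq> b \<and> sigma a b ?\<eta> \<noteq> ?\<eta>}"
  define F where "F = {(a, b). a \<noteq> b \<and> sigma a b ?\<eta> = ?\<eta>'}"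
  have "?\<eta>' \<noteq> ?\<eta>"
    using assms by (auto simp: zeta_def fun_eq_iff)
  then have "F \<subseteq> S" "incl_rate d r ?\<eta> ?\<eta>' = sum weight F"
    by (auto simp: F_def S_def incl_rate_def weight_def)
  then have "incl_total d r ?\<eta> - incl_rate d r ?\<eta> ?\<eta>' = sum weight (S - F)"
    by (simp add: incl_total_def S_def weight_def sum_diff)
  also have "\<dots> \<le> (\<Sum>(a, b)\<in>S - F. d * real N * r a b)"
    using zeta_other_move_weight_le[OF assms(1,2,3)]
    by (intro sum_mono) (auto simp: S_def F_def weight_def)
  also have "\<dots> \<le> (\<Sum>(a, b)\<in>UNIV. d * real N * r a b)"
    using d_nonneg r_nonneg by (intro sum_mono2) (auto split: prod.splits)
  also have "\<dots> = d * real N * (\<Sum>(a, b)\<in>UNIV. r a b)"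
    by (simp add: sum_distrib_left case_prod_unfold)
  finally show ?thesis .
qed

lemma hit_prob_zeta_Suc_diff_le:
  assumes "x \<noteq> y" "r x y > 0" "r y x = 0" "w \<in> A" "1 \<le> i" "i < N"
  shows "\<bar>hit_prob d r {xi N w} (xi N ` A) (zeta N i x y)
          - hit_prob d r {xi N w} (xi N ` A) (zeta N (Suc i) x y)\<bar>
     \<le> d * ((\<Sum>(a, b)\<in>UNIV. r a b) / r x y) * (real N / (real i * real (N - i)))"
proof -
  have "\<bar>hit_prob d r {xi N w} (xi N ` A) (zeta N i x y)
          - hit_prob d r {xi N w} (xi N ` A) (zeta N (Suc i) x y)\<bar>
      \<le> 1 - incl_jump d r (zeta N i x y) (zeta N (Suc i) x y)"
  proof (rule hit_prob_diff_le_escape)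
    show "{xi N w} \<subseteq> xi N ` A" using assms(4) by simp
    show "zeta N i x y \<notin> xi N ` A" using assms by (intro zeta_notin_xi_image)
    show "zeta N (Suc i) x y \<in> jump_targets (zeta N i x y)"
      using assms by (intro zeta_Suc_in_jump_targets)
  qed
  also have "\<dots> \<le> d * real N * (\<Sum>(a, b)\<in>UNIV. r a b) / (real (N - i) * real i * r x y)"
    unfolding incl_jump_def using assms
    by (intro one_minus_div_le_div incl_rate_zeta_Suc_ge incl_rate_le_total
        incl_total_minus_rate_zeta_le) auto
  also have "\<dots> = d * ((\<Sum>(a, b)\<in>UNIV. r a b) / r x y) * (real N / (real i * real (N - i)))"
    by (simp add: field_simps)
  finally show ?thesis .
qed

lemma hit_prob_zeta_xi_diff_le:
  assumes "x \<noteq> y" "r x y > 0" "r y x = 0" "w \<in> A" "1 \<le> j" "j \<le> N"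
  shows "\<bar>hit_prob d r {xi N w} (xi N ` A) (zeta N j x y)
          - hit_prob d r {xi N w} (xi N ` A) (xi N y)\<bar>
     \<le> d * ((\<Sum>(a, b)\<in>UNIV. r a b) / r x y) * (\<Sum>i=j..<N. real N / (real i * real (N - i)))"
proof -
  let ?h = "\<lambda>i. hit_prob d r {xi N w} (xi N ` A) (zeta N i x y)"
  have "\<bar>?h j - ?h N\<bar> \<le> (\<Sum>i=j..<N. \<bar>?h i - ?h (Suc i)\<bar>)"
    using assms(6) by (rule abs_diff_le_sum_abs_Suc_diff)
  also have "\<dots> \<le> (\<Sum>i=j..<N. d * ((\<Sum>(a, b)\<in>UNIV. r a b) / r x y) * (real N / (real i * real (N - i))))"
    using assms by (intro sum_mono hit_prob_zeta_Suc_diff_le) auto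
  finally show ?thesis
    using assms(1) by (simp add: zeta_N_eq_xi sum_distrib_left)
qed

lemma hit_prob_zeta_1_xi_diff_le:
  assumes "x \<noteq> y" "r x y > 0" "r y x = 0" "w \<in> A" "3 \<le> N"
  shows "\<bar>hit_prob d r {xi N w} (xi N ` A) (zeta N 1 x y)
          - hit_prob d r {xi N w} (xi N ` A) (xi N y)\<bar>
     \<le> 4 * ((\<Sum>(a, b)\<in>UNIV. r a b) / r x y) * (d * ln (real N))"
proof -
  let ?K = "(\<Sum>(a, b)\<in>UNIV. r a b) / r x y"
  have "0 \<le> d * ?K"
    by (intro mult_nonneg_nonneg divide_nonneg_pos d_nonneg sum_rates_nonneg assms(2))
  have "\<bar>hit_prob d r {xi N w} (xi N ` A) (zeta N 1 x y)
          - hit_prob d r {xi N w} (xi N ` A) (xi N y)\<bar>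
      \<le> d * ?K * (\<Sum>i=1..<N. real N / (real i * real (N - i)))"
    using assms by (intro hit_prob_zeta_xi_diff_le) auto
  also have "\<dots> \<le> d * ?K * (4 * ln (real N))"
    using sum_N_div_prod_le_4_ln[OF assms(5)] \<open>0 \<le> d * ?K\<close> by (rule mult_left_mono)
  finally show ?thesis
    by (simp add: mult_ac)
qed

lemma hit_prob_zeta_N_minus_1_xi_diff_le:
  assumes "x \<noteq> y" "r x y > 0" "r y x = 0" "w \<in> A" "2 \<le> N"
  shows "\<bar>hit_prob d r {xi N w} (xi N ` A) (zeta N (N - 1) x y)
          - hit_prob d r {xi N w} (xi N ` A) (xi N y)\<bar>
     \<le> 2 * ((\<Sum>(a, b)\<in>UNIV. r a b) / r x y) * d"
proof -
  let ?K = "(\<Sum>(a, b)\<in>UNIV. r a b) / r x y"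
  have "0 \<le> d * ?K"
    by (intro mult_nonneg_nonneg divide_nonneg_pos d_nonneg sum_rates_nonneg assms(2))
  have "\<bar>hit_prob d r {xi N w} (xi N ` A) (zeta N (N - 1) x y)
          - hit_prob d r {xi N w} (xi N ` A) (xi N y)\<bar>
      \<le> d * ?K * (\<Sum>i=N-1..<N. real N / (real i * real (N - i)))"
    using assms by (intro hit_prob_zeta_xi_diff_le) auto
  also have "\<dots> \<le> d * ?K * 2"
    using sum_last_N_div_prod_le_2[OF assms(5)] \<open>0 \<le> d * ?K\<close> by (rule mult_left_mono)
  finally show ?thesis
    by (simp add: mult_ac)
qed

end

theorem lemma4p9:
  fixes r :: "'a::finite \<Rightarrow> 'a \<Rightarrow> real" and d :: "nat \<Rightarrow> real"
    and A :: "'a set" and w x y :: 'a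
  assumes r_nonneg: "\<And>a b. r a b \<ge> 0"
    and r_diag: "\<And>a. r a a = 0"
    and irred: "irreducible_rates r"
    and d_pos: "\<And>N. d N > 0"
    and d_lim: "d \<longlonglongrightarrow> 0"
    and A_ne: "A \<noteq> {}" and wA: "w \<in> A"
    and xy: "x \<noteq> y" and rxy: "r x y > 0" and ryx: "r y x = 0"
  shows "(\<lambda>N. \<bar>hit_prob (d N) r {xi N w} (xi N ` A) (zeta N 1 x y)
              - hit_prob (d N) r {xi N w} (xi N ` A) (xi N y)\<bar>)
           \<in> O(\<lambda>N. d N * ln (real N))
    \<and> (\<lambda>N. \<bar>hit_prob (d N) r {xi N w} (xi N ` A) (zeta N (N - 1) x y)
              - hit_prob (d N) r {xi N w} (xi N ` A) (xi N y)\<bar>)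
           \<in> O(\<lambda>N. d N)"
proof -
  define K where "K = (\<Sum>(a, b)\<in>UNIV. r a b) / r x y"
  let ?h = "\<lambda>N. hit_prob (d N) r {xi N w} (xi N ` A)"
  have first: "\<bar>?h N (zeta N 1 x y) - ?h N (xi N y)\<bar> \<le> 4 * K * norm (d N * ln (real N))"
    if "3 \<le> N" for N
    using hit_prob_zeta_1_xi_diff_le[of "d N" r x y w A N] d_pos[of N] r_nonneg xy rxy ryx wA that
    by (simp add: K_def abs_mult)
  have last: "\<bar>?h N (zeta N (N - 1) x y) - ?h N (xi N y)\<bar> \<le> 2 * K * norm (d N)"
    if "3 \<le> N" for N
    using hit_prob_zeta_N_minus_1_xi_diff_le[of "d N" r x y w A N] d_pos[of N] r_nonneg xy rxy ryx wA that
    by (simp add: K_def)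
  show ?thesis
  proof
    show "(\<lambda>N. \<bar>?h N (zeta N 1 x y) - ?h N (xi N y)\<bar>) \<in> O(\<lambda>N. d N * ln (real N))"
      by (intro bigoI[where c = "4 * K"] eventually_sequentiallyI[of 3]) (use first in simp)
    show "(\<lambda>N. \<bar>?h N (zeta N (N - 1) x y) - ?h N (xi N y)\<bar>) \<in> O(\<lambda>N. d N)"
      by (intro bigoI[where c = "2 * K"] eventually_sequentiallyI[of 3]) (use last in simp)
  qed
qed

end
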